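(* Let $(c,d),(e,f)\in\mathcal{B}$ with $d$ and $f$ odd and $d\neq f$. Then $U=\{(0,0),(c,d),(e,f)\}\subseteq\mathcal{B}$ is unavoidable.
   Context: The bicyclic inverse semigroup is $\mathcal{B}=\{(a,b)\in\mathbb{Z}\times\mathbb{Z}\mid a\ge 0,\ a+b\ge 0\}$ with multiplication $(a,b)(c,d)=(\max\{c+d,a\}-d,\ b+d)$. A subset $U\subseteq\mathcal{B}$ is called avoidable if $\mathcal{B}$ can be partitioned into two subsets $A$ and $B$ such that no element of $U$ can be written as a product $xy$ of two distinct elements $x\neq y$ both in $A$, or both in $B$. A set is unavoidable if it is not avoidable. *)

theory Defs
  imports Main
begin

text \<open>The bicyclic inverse semigroup, represented as pairs of integers.\<close>

definition bicyclic :: "(int \<times> int) set" where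
  "bicyclic = {(a, b). a \<ge> 0 \<and> a + b \<ge> 0}"

definition bmult :: "int \<times> int \<Rightarrow> int \<times> int \<Rightarrow> int \<times> int" where
  "bmult x y = (case x of (a, b) \<Rightarrow> case y of (c, d) \<Rightarrow> (max (c + d) a - d, b + d))"

definition avoidable :: "(int \<times> int) set \<Rightarrow> bool" where
  "avoidable U \<longleftrightarrow> (\<exists>A B. A \<union> B = bicyclic \<and> A \<inter> B = {} \<and>
     (\<forall>x\<in>A. \<forall>y\<in>A. x \<noteq> y \<longrightarrow> bmult x y \<notin> U) \<and>
     (\<forall>x\<in>B. \<forall>y\<in>B. x \<noteq> y \<longrightarrow> bmult x y \<notin> U))"

definition unavoidable :: "(int \<times> int) set \<Rightarrow> bool" where
  "unavoidable U \<longleftrightarrow> \<not> avoidable U"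

end

theory Submission
  imports Defs
begin

text \<open>Colour \<open>\<B>\<close> by the two parts of a partition. Every product relation \<open>x y = u\<close>
  with \<open>u \<in> U\<close> and \<open>x \<noteq> y\<close> forces \<open>x\<close> and \<open>y\<close> into different parts. Put
  \<open>\<lambda>(t) = (max 0 (-t), t)\<close>. The equation \<open>\<lambda>(-t) \<lambda>(t) = (0,0)\<close> separates \<open>\<lambda>(t)\<close> from
  \<open>\<lambda>(-t)\<close>, and for \<open>(c,d) \<in> U\<close> with \<open>d\<close> odd the path
  \<open>\<lambda>(t) \<midarrow> (c, d-t) \<midarrow> (c+d-t, t) \<midarrow> \<lambda>(d-t)\<close> of length three separates \<open>\<lambda>(t)\<close> from
  \<open>\<lambda>(d-t)\<close>. With \<open>f - d = 2m\<close> the three reflections \<open>t \<mapsto> f-t\<close>, \<open>t \<mapsto> d-t\<close>,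
  \<open>t \<mapsto> -t\<close> carry \<open>m \<mapsto> d+m \<mapsto> -m \<mapsto> m\<close>: an odd cycle, which cannot be 2-coloured.\<close>

lemma bmult_Pair [simp]: "bmult (a, b) (c, d) = (max (c + d) a - d, b + d)"
  by (simp add: bmult_def)

lemma Pair_in_bicyclic [simp]: "(a, b) \<in> bicyclic \<longleftrightarrow> a \<ge> 0 \<and> a + b \<ge> 0"
  by (simp add: bicyclic_def)

definition lowest :: "int \<Rightarrow> int \<times> int" where
  "lowest t = (max 0 (- t), t)"

lemma lowest_in_bicyclic [simp]: "lowest t \<in> bicyclic"
  by (simp add: lowest_def)

locale avoiding_part =
  fixes U A :: "(int \<times> int) set"
  assumes free_in: "\<lbrakk>x \<in> A; y \<in> A; x \<noteq> y\<rbrakk> \<Longrightarrow> bmult x y \<notin> U"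
    and free_out: "\<lbrakk>x \<in> bicyclic - A; y \<in> bicyclic - A; x \<noteq> y\<rbrakk> \<Longrightarrow> bmult x y \<notin> U"
begin

lemma factors_separated:
  assumes "x \<in> bicyclic" "y \<in> bicyclic" "x \<noteq> y" "bmult x y \<in> U"
  shows "x \<in> A \<longleftrightarrow> y \<notin> A"
  using assms free_in free_out by blast

lemma lowest_uminus_separated:
  assumes "(0, 0) \<in> U" "t \<noteq> 0"
  shows "lowest (- t) \<in> A \<longleftrightarrow> lowest t \<notin> A"
proof -
  have "lowest (- s) \<in> A \<longleftrightarrow> lowest s \<notin> A" if "s > 0" for s
    by (rule factors_separated) (use assms(1) that in \<open>auto simp: lowest_def\<close>)
  from this[of t] this[of "- t"] assms(2) show ?thesis
    by (cases "t > 0") auto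
qed

lemma lowest_reflect_separated_le:
  assumes cd: "(c, d) \<in> bicyclic" "(c, d) \<in> U" "odd d" and t: "t \<le> c + d"
  shows "lowest t \<in> A \<longleftrightarrow> lowest (d - t) \<notin> A"
proof -
  have dt: "t \<noteq> d - t"
    using cd(3) by presburger
  have "bmult (lowest t) (c, d - t) = (c, d)"
    and "bmult (c + d - t, t) (c, d - t) = (c, d)"
    and "bmult (c + d - t, t) (lowest (d - t)) = (c, d)"
    using cd(1) t by (auto simp: lowest_def max_def)
  then have "lowest t \<in> A \<longleftrightarrow> (c, d - t) \<notin> A"
    and "(c + d - t, t) \<in> A \<longleftrightarrow> (c, d - t) \<notin> A"
    and "(c + d - t, t) \<in> A \<longleftrightarrow> lowest (d - t) \<notin> A"
    using cd(1,2) t dt by (simp_all add: factors_separated lowest_def)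
  then show ?thesis
    by blast
qed

lemma lowest_reflect_separated:
  assumes "(c, d) \<in> bicyclic" "(c, d) \<in> U" "odd d"
  shows "lowest t \<in> A \<longleftrightarrow> lowest (d - t) \<notin> A"
proof (cases "t \<le> c + d")
  case True
  then show ?thesis
    using lowest_reflect_separated_le[OF assms] by blast
next
  case False
  then have "d - t \<le> c + d"
    using assms(1) by simp
  from lowest_reflect_separated_le[OF assms this] show ?thesis
    by auto
qed

end

lemma avoidable_imp_avoiding_part:
  assumes "avoidable U"
  obtains A where "avoiding_part U A"
proof -
  obtain A B where "A \<union> B = bicyclic" "A \<inter> B = {}"
    "\<forall>x\<in>A. \<forall>y\<in>A. x \<noteq> y \<longrightarrow> bmult x y \<notin> U"
    "\<forall>x\<in>B. \<forall>y\<in>B. x \<noteq> y \<longrightarrow> bmult x y \<notin> U"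
    using assms unfolding avoidable_def by blast
  moreover from this(1,2) have "B = bicyclic - A"
    by blast
  ultimately have "avoiding_part U A"
    by unfold_locales auto
  then show thesis
    by (rule that)
qed

theorem proposition6p1:
  fixes c d e f :: int
  assumes "(c, d) \<in> bicyclic" and "(e, f) \<in> bicyclic"
    and "odd d" and "odd f" and "d \<noteq> f"
  shows "unavoidable {(0, 0), (c, d), (e, f)}"
  unfolding unavoidable_def
proof
  let ?U = "{(0, 0), (c, d), (e, f)}"
  assume "avoidable ?U"
  then obtain A where "avoiding_part ?U A"
    by (rule avoidable_imp_avoiding_part)
  then interpret avoiding_part ?U A .
  define m where "m = (f - d) div 2"
  have m: "f - d = 2 * m"
    unfolding m_def using assms(3,4) by presburger
  with assms(5) have "m \<noteq> 0"
    by simp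
  have "lowest m \<in> A \<longleftrightarrow> lowest (f - m) \<notin> A"
    using lowest_reflect_separated[OF assms(2) _ assms(4), of m] by simp
  moreover have "lowest (f - m) \<in> A \<longleftrightarrow> lowest (- m) \<notin> A"
    using lowest_reflect_separated[OF assms(1) _ assms(3), of "f - m"] m
    by (simp add: algebra_simps)
  moreover have "lowest (- m) \<in> A \<longleftrightarrow> lowest m \<notin> A"
    using lowest_uminus_separated[of m] \<open>m \<noteq> 0\<close> by simp
  ultimately show False
    by blast
qed

end
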